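(* Let $f$ be an invertible $\mathbb F_q$-linearised polynomial over $\mathbb F_{q^h}$, and take $a \in \mathbb F_{q^h}$. Then $f(a f^{-1}(X))$ is linear if and only if $f$ is $\mathbb F_q(a)$-semi-linear.
   Context: Let $q$ be a prime power and $h \geq 1$. An $\mathbb F_q$-linearised polynomial over $\mathbb F_{q^h}$ is a polynomial of the form $f(X) = \sum_{l=0}^{h-1} f_l X^{q^l}$ with coefficients $f_l \in \mathbb F_{q^h}$; it defines an $\mathbb F_q$-linear map $\mathbb F_{q^h} \to \mathbb F_{q^h}$, and it is called invertible if this map is bijective, in which case $f^{-1}$ denotes the inverse map, which is again an $\mathbb F_q$-linearised polynomial. Identities between linearised polynomials are understood as identities of functions on $\mathbb F_{q^h}$ (written $\equiv$). "$f(a f^{-1}(X))$ is linear" means $f(a f^{-1}(X)) \equiv bX$ for some constant $b \in \mathbb F_{q^h}$. $f$ is called $\mathbb F_q(a)$-semi-linear if there exists a field automorphism $\sigma$ of $\mathbb F_{q^h}$ such that $f(\alpha X) = \alpha^\sigma f(X)$ for all $\alpha \in \mathbb F_q(a)$ and all $X \in \mathbb F_{q^h}$. *)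

theory Defs
  imports Main "HOL-Number_Theory.Prime_Powers"
begin

text \<open>The ambient field F_{q^h} is a finite field type 'a with CARD('a) = q^h.
  The subfield F_q is the set of elements fixed by x maps to x^q.\<close>

definition Fq :: "nat \<Rightarrow> 'a::field set" where
  "Fq q = {x. x ^ q = x}"

definition linearised :: "nat \<Rightarrow> nat \<Rightarrow> (nat \<Rightarrow> 'a::field) \<Rightarrow> 'a \<Rightarrow> 'a" where
  "linearised q h c x = (\<Sum>l<h. c l * x ^ (q ^ l))"

definition is_subfield :: "'a::field set \<Rightarrow> bool" where
  "is_subfield S \<longleftrightarrow> 0 \<in> S \<and> 1 \<in> S \<and>
     (\<forall>x\<in>S. \<forall>y\<in>S. x + y \<in> S \<and> x * y \<in> S) \<and>
     (\<forall>x\<in>S. - x \<in> S \<and> inverse x \<in> S)"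

definition Fq_adj :: "nat \<Rightarrow> 'a::field \<Rightarrow> 'a set" where
  "Fq_adj q a = \<Inter> {S. is_subfield S \<and> Fq q \<subseteq> S \<and> a \<in> S}"

definition field_automorphism :: "('a::field \<Rightarrow> 'a) \<Rightarrow> bool" where
  "field_automorphism \<sigma> \<longleftrightarrow> bij \<sigma> \<and>
     (\<forall>x y. \<sigma> (x + y) = \<sigma> x + \<sigma> y) \<and> (\<forall>x y. \<sigma> (x * y) = \<sigma> x * \<sigma> y) \<and> \<sigma> 1 = 1"

definition semi_linear_over :: "'a::field set \<Rightarrow> ('a \<Rightarrow> 'a) \<Rightarrow> bool" where
  "semi_linear_over K f \<longleftrightarrow>
     (\<exists>\<sigma>. field_automorphism \<sigma> \<and> (\<forall>\<alpha>\<in>K. \<forall>x. f (\<alpha> * x) = \<sigma> \<alpha> * f x))"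

end

(* If f(a y) = b f(y) for all y, then the linearised polynomial f(aX) - b f(X) has degree
   below q^h and vanishes on the whole field, so its coefficients c_l (a^(q^l) - b) are zero:
   a^(q^l) = b whenever c_l is nonzero. Thus a lies in the subfield S on which all Frobenius
   powers x -> x^(q^l) with c_l nonzero agree. S contains F_q, hence F_q(a), and on S the map f
   is semi-linear with respect to x -> x^(q^l0) for any l0 with c_l0 nonzero. Conversely,
   semi-linearity gives f(a f^-1(X)) = sigma(a) X. *)

theory Submission
  imports Defs "HOL-Computational_Algebra.Polynomial"
begin

lemma prime_CHAR_finite_field: "prime CHAR('a::{field,finite})"
  by (simp add: finite_imp_CHAR_pos prime_CHAR_semidom)

lemma CHAR_dvd_card: "CHAR('a::{ring_1,finite}) dvd card (UNIV :: 'a set)"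
proof -
  have "(\<Sum>x\<in>UNIV. x + 1) = (\<Sum>x\<in>(UNIV :: 'a set). x)"
    by (rule sum.reindex_bij_witness[of _ "\<lambda>x. x - 1" "\<lambda>x. x + 1"]) auto
  then have "of_nat (card (UNIV :: 'a set)) = (0 :: 'a)"
    by (simp add: sum.distrib)
  then show ?thesis by (simp add: of_nat_eq_0_iff_char_dvd)
qed

lemma CHAR_power_if_card_eq_primepow_power:
  assumes "primepow q" and "card (UNIV :: 'a::{field,finite} set) = q ^ h"
  obtains e where "q = CHAR('a) ^ e"
proof -
  obtain p e where p: "prime p" and q: "q = p ^ e"
    using assms(1) unfolding primepow_def by blast
  have "CHAR('a) dvd p ^ (e * h)"
    using CHAR_dvd_card[where 'a = 'a] assms(2) q by (simp add: power_mult)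
  then have "CHAR('a) dvd p"
    using prime_CHAR_finite_field prime_dvd_power by blast
  then have "CHAR('a) = p"
    using primes_dvd_imp_eq[OF prime_CHAR_finite_field p] by blast
  with q that show thesis by blast
qed

lemma field_automorphism_power_CHAR:
  assumes "m = CHAR('a::{field,finite}) ^ n"
  shows "field_automorphism (\<lambda>x::'a. x ^ m)"
proof -
  have add: "(x + y) ^ m = x ^ m + y ^ m" for x y :: 'a
    by (rule freshmans_dream'[OF prime_CHAR_finite_field assms])
  have "inj (\<lambda>x::'a. x ^ m)"
  proof (rule injI)
    fix x y :: 'a
    assume "x ^ m = y ^ m"
    moreover have "x ^ m = (x - y) ^ m + y ^ m"
      using add[of "x - y" y] by simp
    ultimately show "x = y" by simp
  qed
  then show ?thesis
    unfolding field_automorphism_def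
    by (simp add: add power_mult_distrib bij_def finite_UNIV_inj_surj)
qed

lemma field_automorphism_zero: "field_automorphism \<sigma> \<Longrightarrow> \<sigma> 0 = 0"
  unfolding field_automorphism_def by (metis add_cancel_right_right add_0)

lemma field_automorphism_minus:
  assumes "field_automorphism \<sigma>"
  shows "\<sigma> (- x) = - \<sigma> x"
proof -
  have "\<sigma> (- x) + \<sigma> x = 0"
    using assms field_automorphism_zero[OF assms]
    unfolding field_automorphism_def by (metis add.left_inverse)
  then show ?thesis by (simp add: eq_neg_iff_add_eq_0)
qed

lemma field_automorphism_inverse:
  assumes "field_automorphism \<sigma>"
  shows "\<sigma> (inverse x) = inverse (\<sigma> x)"
proof (cases "x = 0")
  case True
  then show ?thesis using field_automorphism_zero[OF assms] by simp
next
  case False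
  then have "\<sigma> x * \<sigma> (inverse x) = 1"
    using assms unfolding field_automorphism_def by (metis right_inverse)
  then show ?thesis by (simp add: inverse_unique)
qed

lemma is_subfield_equaliser:
  assumes \<sigma>: "\<And>i. i \<in> I \<Longrightarrow> field_automorphism (\<sigma> i)" and \<tau>: "field_automorphism \<tau>"
  shows "is_subfield {x. \<forall>i\<in>I. \<sigma> i x = \<tau> x}"
  using field_automorphism_zero[OF \<sigma>] field_automorphism_zero[OF \<tau>]
    field_automorphism_minus[OF \<sigma>] field_automorphism_minus[OF \<tau>]
    field_automorphism_inverse[OF \<sigma>] field_automorphism_inverse[OF \<tau>]
    \<sigma> \<tau> unfolding is_subfield_def field_automorphism_def by auto

lemma mem_Fq_adj: "a \<in> Fq_adj q a"
  unfolding Fq_adj_def by blast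

lemma Fq_adj_subset: "is_subfield S \<Longrightarrow> Fq q \<subseteq> S \<Longrightarrow> a \<in> S \<Longrightarrow> Fq_adj q a \<subseteq> S"
  unfolding Fq_adj_def by blast

lemma Fq_power_power_eq:
  assumes "x \<in> Fq q"
  shows "x ^ (q ^ l) = x"
proof (induction l)
  case (Suc l)
  then show ?case
    using assms unfolding Fq_def by (simp add: power_mult mult.commute)
qed simp

lemma linearised_mult:
  assumes "\<And>l. l < h \<Longrightarrow> c l \<noteq> 0 \<Longrightarrow> \<alpha> ^ (q ^ l) = \<beta>"
  shows "linearised q h c (\<alpha> * x) = \<beta> * linearised q h c x"
  unfolding linearised_def sum_distrib_left
proof (rule sum.cong)
  fix l assume "l \<in> {..<h}"
  then show "c l * (\<alpha> * x) ^ q ^ l = \<beta> * (c l * x ^ q ^ l)"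
    using assms[of l] by (cases "c l = 0") (auto simp: power_mult_distrib)
qed simp

lemma linearised_coeff_eq_0:
  fixes d :: "nat \<Rightarrow> 'a::{field,finite}"
  assumes q: "1 < q" and card: "q ^ h \<le> card (UNIV :: 'a set)"
    and zero: "\<And>x. linearised q h d x = 0" and l: "l < h"
  shows "d l = 0"
proof -
  define P where "P = (\<Sum>l<h. monom (d l) (q ^ l))"
  have "degree P \<le> q ^ (h - 1)"
    unfolding P_def
  proof (rule degree_sum_le)
    fix k assume "k \<in> {..<h}"
    then have "q ^ k \<le> q ^ (h - 1)" using q by (intro power_increasing) auto
    then show "degree (monom (d k) (q ^ k)) \<le> q ^ (h - 1)"
      using degree_monom_le order_trans by blast
  qed simp
  also have "\<dots> < q ^ h"
    using q l by (intro power_strict_increasing) auto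
  also note card
  finally have "P = 0"
    using zero by (intro poly_eqI_degree[of UNIV])
      (auto simp: P_def poly_sum poly_monom linearised_def)
  then have "0 = coeff P (q ^ l)" by simp
  also have "\<dots> = (\<Sum>k<h. if k = l then d k else 0)"
    unfolding P_def coeff_sum coeff_monom using q by (intro sum.cong) (auto simp: power_inject_exp)
  also have "\<dots> = d l" using l by simp
  finally show ?thesis by simp
qed

lemma linearised_power_eq_if_scale:
  fixes c :: "nat \<Rightarrow> 'a::{field,finite}"
  assumes q: "1 < q" and card: "q ^ h \<le> card (UNIV :: 'a set)"
    and scale: "\<And>y. linearised q h c (a * y) = b * linearised q h c y"
    and l: "l < h" "c l \<noteq> 0"
  shows "a ^ (q ^ l) = b"
proof -
  have "linearised q h (\<lambda>k. c k * (a ^ (q ^ k) - b)) y = 0" for y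
    using scale[of y] unfolding linearised_def
    by (simp add: sum_subtractf sum_distrib_left algebra_simps)
  then have "c l * (a ^ (q ^ l) - b) = 0"
    by (rule linearised_coeff_eq_0[OF q card _ l(1)])
  then show ?thesis using l(2) by simp
qed

lemma linearised_coeff_nonzero_if_inj:
  assumes "inj (linearised q h c)"
  shows "\<exists>l<h. c l \<noteq> 0"
proof (rule ccontr)
  assume "\<not> ?thesis"
  then have "linearised q h c 0 = linearised q h c 1"
    by (simp add: linearised_def)
  then show False using assms by (auto dest: injD)
qed

theorem lemma5p2:
  fixes q h :: nat and c :: "nat \<Rightarrow> 'a::{field,finite}" and a :: 'a
  assumes "primepow q" and "h \<ge> 1" and "card (UNIV :: 'a set) = q ^ h"
    and "bij (linearised q h c)"
  shows "(\<exists>b. \<forall>x. linearised q h c (a * inv (linearised q h c) x) = b * x)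
     \<longleftrightarrow> semi_linear_over (Fq_adj q a) (linearised q h c)"
proof
  assume "\<exists>b. \<forall>x. linearised q h c (a * inv (linearised q h c) x) = b * x"
  then obtain b where scale: "\<And>y. linearised q h c (a * y) = b * linearised q h c y"
    using assms(4) by (metis bij_is_inj inv_f_f)
  obtain l0 where l0: "l0 < h" "c l0 \<noteq> 0"
    using linearised_coeff_nonzero_if_inj assms(4) bij_is_inj by blast
  obtain e where "q = CHAR('a) ^ e"
    using CHAR_power_if_card_eq_primepow_power assms(1,3) by blast
  then have frob: "field_automorphism (\<lambda>x::'a. x ^ (q ^ l))" for l
    by (intro field_automorphism_power_CHAR[where n = "e * l"]) (simp add: power_mult)
  define S where "S = {x::'a. \<forall>l \<in> {l. l < h \<and> c l \<noteq> 0}. x ^ (q ^ l) = x ^ (q ^ l0)}"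
  have "a ^ (q ^ l) = b" if "l < h" "c l \<noteq> 0" for l
    using linearised_power_eq_if_scale[OF _ _ scale that] primepow_gt_Suc_0[OF assms(1)] assms(3)
    by simp
  then have "Fq_adj q a \<subseteq> S"
    using l0 frob unfolding S_def
    by (intro Fq_adj_subset is_subfield_equaliser) (auto simp: Fq_power_power_eq)
  then show "semi_linear_over (Fq_adj q a) (linearised q h c)"
    unfolding semi_linear_over_def S_def using frob
    by (blast intro: linearised_mult)
next
  assume "semi_linear_over (Fq_adj q a) (linearised q h c)"
  then obtain \<sigma> where "\<And>x. linearised q h c (a * x) = \<sigma> a * linearised q h c x"
    unfolding semi_linear_over_def using mem_Fq_adj by blast
  then show "\<exists>b. \<forall>x. linearised q h c (a * inv (linearised q h c) x) = b * x"
    using assms(4) by (metis bij_is_surj surj_f_inv_f)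
qed

end
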